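(* Let $f:\mathbb{R}^2\to\mathbb{C}$ be smooth and let $Q=I_1\times I_2$ be a rectangle in $\mathbb{R}^2$ ($I_1,I_2$ bounded intervals). For $\alpha=(\alpha_1,\alpha_2)\in\mathbb{Z}^2$ let $Q(\alpha)=\{(x_1,x_2):|I_i|\alpha_i-\tfrac{|I_i|}{2}\le x_i<|I_i|\alpha_i+\tfrac{|I_i|}{2},\ i=1,2\}$. Then there is an absolute constant $C$, independent of $Q$ and $f$, such that $$\sum_{\alpha\in\mathbb{Z}^2}\sup_{Q(\alpha)}|f|^2\le C\Big(\frac{|I_1|}{|I_2|}\int_{\mathbb{R}^2}|\partial_1 f|^2+|Q|\int_{\mathbb{R}^2}|\partial_2\partial_1 f|^2+\frac{|I_2|}{|I_1|}\int_{\mathbb{R}^2}|\partial_2 f|^2+\frac{1}{|Q|}\int_{\mathbb{R}^2}|f|^2\Big).$$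
   Context: $|I|$ denotes the length of an interval and $|Q|=|I_1||I_2|$ the area of $Q$. *)

theory Defs
  imports "HOL-Analysis.Analysis"
begin

fun Ck :: "nat \<Rightarrow> (real \<times> real \<Rightarrow> complex) \<Rightarrow> bool" where
  "Ck 0 f = continuous_on UNIV f"
| "Ck (Suc k) f = (\<exists>f'. (\<forall>x. (f has_derivative f' x) (at x)) \<and> (\<forall>v. Ck k (\<lambda>x. f' x v)))"

definition smooth :: "(real \<times> real \<Rightarrow> complex) \<Rightarrow> bool" where
  "smooth f = (\<forall>k. Ck k f)"

definition d1 :: "(real \<times> real \<Rightarrow> complex) \<Rightarrow> real \<times> real \<Rightarrow> complex" where
  "d1 f = (\<lambda>(x1, x2). vector_derivative (\<lambda>t. f (t, x2)) (at x1))"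

definition d2 :: "(real \<times> real \<Rightarrow> complex) \<Rightarrow> real \<times> real \<Rightarrow> complex" where
  "d2 f = (\<lambda>(x1, x2). vector_derivative (\<lambda>t. f (x1, t)) (at x2))"

definition Qa :: "real \<Rightarrow> real \<Rightarrow> int \<times> int \<Rightarrow> (real \<times> real) set" where
  "Qa l1 l2 \<alpha> = {(x1, x2).
     l1 * of_int (fst \<alpha>) - l1 / 2 \<le> x1 \<and> x1 < l1 * of_int (fst \<alpha>) + l1 / 2 \<and>
     l2 * of_int (snd \<alpha>) - l2 / 2 \<le> x2 \<and> x2 < l2 * of_int (snd \<alpha>) + l2 / 2}"

end

theory Submission
  imports Defs
begin

text \<open>
  In one variable, \<open>|g x|\<^sup>2 - |g y|\<^sup>2\<close> is the integral of \<open>2 \<langle>g, g'\<rangle>\<close> between \<open>y\<close> and \<open>x\<close>;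
  averaging over \<open>y\<close> in an interval of length \<open>l\<close> and using
  \<open>2 |g| |g'| \<le> |g|\<^sup>2 / l + l |g'|\<^sup>2\<close> gives
  \<open>|g x|\<^sup>2 \<le> (2 / l) \<integral> |g|\<^sup>2 + l \<integral> |g'|\<^sup>2\<close> on that interval.
  Applying this in \<open>x\<^sub>1\<close> to \<open>f\<close>, and then in \<open>x\<^sub>2\<close> to \<open>f\<close> and \<open>\<partial>\<^sub>1 f\<close> integrated over the first
  side by Tonelli, bounds \<open>sup\<^bsub>Q(\<alpha>)\<^esub> |f|\<^sup>2\<close> by the four weighted \<open>L\<^sup>2\<close> integrals over \<open>Q(\<alpha>)\<close>
  with constant 4. The rectangles \<open>Q(\<alpha>)\<close> tile the plane, so summing over \<open>\<alpha>\<close> gives \<open>C = 4\<close>.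
\<close>

lemma le_average_plus_integral_abs_deriv:
  fixes h h' :: "real \<Rightarrow> real"
  assumes deriv: "\<And>t. (h has_real_derivative h' t) (at t)"
    and cont: "continuous_on {a..b} h'" and "a < b" and "x \<in> {a..b}"
  shows "h x \<le> integral {a..b} h / (b - a) + integral {a..b} (\<lambda>t. \<bar>h' t\<bar>)"
proof -
  define K where "K = integral {a..b} (\<lambda>t. \<bar>h' t\<bar>)"
  have int_abs: "(\<lambda>t. \<bar>h' t\<bar>) integrable_on {u..v}" if "{u..v} \<subseteq> {a..b}" for u v
    by (intro integrable_continuous_interval continuous_intros continuous_on_subset[OF cont that])
  have int_h: "h integrable_on {a..b}"
    using deriv by (intro integrable_continuous_interval continuous_at_imp_continuous_on)
      (auto intro: DERIV_isCont)
  have osc: "h x \<le> h y + K" if y: "y \<in> {a..b}" for y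
  proof -
    let ?u = "min x y" and ?v = "max x y"
    have sub: "{?u..?v} \<subseteq> {a..b}" using y \<open>x \<in> {a..b}\<close> by auto
    have "(h' has_integral (h ?v - h ?u)) {?u..?v}"
      using deriv by (intro fundamental_theorem_of_calculus)
        (auto simp: has_real_derivative_iff_has_vector_derivative[symmetric] intro: DERIV_subset)
    then have "\<bar>h x - h y\<bar> = \<bar>integral {?u..?v} h'\<bar>"
      by (auto simp: integral_unique min_def max_def)
    also have "\<dots> \<le> integral {?u..?v} (\<lambda>t. \<bar>h' t\<bar>)"
      using integral_norm_bound_integral[OF has_integral_integrable[OF \<open>(h' has_integral _) _\<close>] int_abs[OF sub]]
      by simp
    also have "\<dots> \<le> K"
      unfolding K_def by (rule integral_subset_le[OF sub int_abs[OF sub] int_abs]) auto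
    finally show ?thesis by linarith
  qed
  have "(b - a) * h x = integral {a..b} (\<lambda>y. h x)" using \<open>a < b\<close> by simp
  also have "\<dots> \<le> integral {a..b} (\<lambda>y. h y + K)"
    using osc int_h by (intro integral_le) (auto intro: integrable_add)
  also have "\<dots> = integral {a..b} h + (b - a) * K"
    using int_h \<open>a < b\<close> by (subst integral_add) auto
  finally show ?thesis using \<open>a < b\<close> by (simp add: K_def field_simps)
qed

lemma sq_norm_le_Sobolev_1d:
  fixes g g' :: "real \<Rightarrow> 'a::real_inner"
  assumes deriv: "\<And>t. (g has_vector_derivative g' t) (at t)"
    and cont: "continuous_on {a..b} g'" and "a < b" and "x \<in> {a..b}"
  shows "(norm (g x))\<^sup>2 \<le> 2 / (b - a) * integral {a..b} (\<lambda>t. (norm (g t))\<^sup>2)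
                            + (b - a) * integral {a..b} (\<lambda>t. (norm (g' t))\<^sup>2)"
proof -
  define l where "l = b - a"
  have "l > 0" using \<open>a < b\<close> by (simp add: l_def)
  have cont_g: "continuous_on {a..b} g"
    using deriv by (intro continuous_at_imp_continuous_on) (auto intro: has_vector_derivative_continuous)
  let ?h = "\<lambda>t. (norm (g t))\<^sup>2" and ?h' = "\<lambda>t. 2 * inner (g t) (g' t)"
  have "(?h has_real_derivative ?h' t) (at t)" for t
  proof -
    have "((\<lambda>t. inner (g t) (g t)) has_vector_derivative inner (g t) (g' t) + inner (g' t) (g t)) (at t)"
      using deriv[of t] unfolding has_vector_derivative_def
      by (auto intro!: derivative_eq_intros simp: algebra_simps)
    then show ?thesis
      by (simp add: has_real_derivative_iff_has_vector_derivative power2_norm_eq_inner inner_commute)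
  qed
  then have "?h x \<le> integral {a..b} ?h / l + integral {a..b} (\<lambda>t. \<bar>?h' t\<bar>)"
    unfolding l_def
    using cont cont_g \<open>a < b\<close> \<open>x \<in> {a..b}\<close>
    by (intro le_average_plus_integral_abs_deriv) (auto intro!: continuous_intros)
  also have "integral {a..b} (\<lambda>t. \<bar>?h' t\<bar>) \<le> integral {a..b} (\<lambda>t. ?h t / l + l * (norm (g' t))\<^sup>2)"
  proof (rule integral_le)
    fix t
    have "0 \<le> (norm (g t) - l * norm (g' t))\<^sup>2 / l" using \<open>l > 0\<close> by simp
    then have "2 * norm (g t) * norm (g' t) \<le> ?h t / l + l * (norm (g' t))\<^sup>2"
      using \<open>l > 0\<close> by (simp add: power2_diff field_simps power2_eq_square)
    moreover have "\<bar>?h' t\<bar> \<le> 2 * norm (g t) * norm (g' t)"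
      using Cauchy_Schwarz_ineq2[of "g t" "g' t"] by simp
    ultimately show "\<bar>?h' t\<bar> \<le> ?h t / l + l * (norm (g' t))\<^sup>2" by linarith
  qed (use cont cont_g \<open>l > 0\<close> in \<open>auto intro!: integrable_continuous_interval continuous_intros\<close>)
  also have "\<dots> = integral {a..b} ?h / l + l * integral {a..b} (\<lambda>t. (norm (g' t))\<^sup>2)"
    using cont cont_g \<open>l > 0\<close>
    by (subst integral_add) (auto intro!: integrable_continuous_interval continuous_intros)
  finally show ?thesis by (simp add: l_def field_simps)
qed

definition L2_sq_on :: "'b::euclidean_space set \<Rightarrow> ('b \<Rightarrow> 'a::real_normed_vector) \<Rightarrow> ennreal" where
  "L2_sq_on S \<phi> = (\<integral>\<^sup>+x. indicator S x * ennreal ((norm (\<phi> x))\<^sup>2) \<partial>lborel)"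

lemma L2_sq_on_Ico_eq_integral:
  fixes \<phi> :: "real \<Rightarrow> 'a::real_normed_vector"
  assumes "continuous_on {a..b} \<phi>" and "a \<le> b"
  shows "L2_sq_on {a..<b} \<phi> = ennreal (integral {a..b} (\<lambda>t. (norm (\<phi> t))\<^sup>2))"
proof -
  let ?\<psi> = "\<lambda>t. (norm (\<phi> t))\<^sup>2"
  have "(?\<psi> has_integral integral {a..b} ?\<psi>) {a..b}"
    using assms by (intro integrable_integral integrable_continuous_interval continuous_intros)
  then have "(?\<psi> has_integral integral {a..b} ?\<psi>) {a..<b}"
    by (rule has_integral_spike_set_eq[THEN iffD1, rotated -1])
       (auto intro: negligible_subset[of "{b}"])
  then have "(\<integral>\<^sup>+t. ennreal (indicator {a..<b} t * ?\<psi> t) \<partial>lborel) = ennreal (integral {a..b} ?\<psi>)"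
    by (rule nn_integral_has_integral_lebesgue[rotated]) auto
  then show ?thesis by (simp add: L2_sq_on_def indicator_mult_ennreal)
qed

lemma sq_norm_le_L2_sq_on_1d:
  fixes g g' :: "real \<Rightarrow> 'a::real_inner"
  assumes deriv: "\<And>t. (g has_vector_derivative g' t) (at t)"
    and cont: "continuous_on {a..b} g'" and "a < b" and "x \<in> {a..b}"
  shows "ennreal ((norm (g x))\<^sup>2)
           \<le> ennreal (2 / (b - a)) * L2_sq_on {a..<b} g + ennreal (b - a) * L2_sq_on {a..<b} g'"
proof -
  have cont_g: "continuous_on {a..b} g"
    using deriv by (intro continuous_at_imp_continuous_on) (auto intro: has_vector_derivative_continuous)
  let ?I = "\<lambda>\<phi>. integral {a..b} (\<lambda>t. (norm (\<phi> t :: 'a))\<^sup>2)"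
  have "0 \<le> ?I g" "0 \<le> ?I g'"
    using cont cont_g
    by (auto intro!: integral_nonneg integrable_continuous_interval continuous_intros)
  with \<open>a < b\<close> have "ennreal (2 / (b - a) * ?I g + (b - a) * ?I g')
      = ennreal (2 / (b - a)) * ennreal (?I g) + ennreal (b - a) * ennreal (?I g')"
    by (simp add: ennreal_plus[symmetric] ennreal_mult[symmetric] del: ennreal_plus)
  moreover have "ennreal ((norm (g x))\<^sup>2) \<le> ennreal (2 / (b - a) * ?I g + (b - a) * ?I g')"
    using sq_norm_le_Sobolev_1d[OF assms] by (rule ennreal_leI)
  ultimately show ?thesis
    using cont cont_g \<open>a < b\<close> by (simp add: L2_sq_on_Ico_eq_integral)
qed

lemma nn_integral_rectangle_iterated:
  fixes \<psi> :: "real \<times> real \<Rightarrow> ennreal"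
  assumes [measurable]: "\<psi> \<in> borel_measurable borel" "I \<in> sets borel" "J \<in> sets borel"
  shows "(\<integral>\<^sup>+t. indicator I t * (\<integral>\<^sup>+s. indicator J s * \<psi> (t, s) \<partial>lborel) \<partial>lborel)
       = (\<integral>\<^sup>+z. indicator (I \<times> J) z * \<psi> z \<partial>lborel)"
proof -
  have [measurable]: "I \<times> J \<in> sets borel"
    unfolding borel_prod[symmetric] by measurable
  have "(\<integral>\<^sup>+t. indicator I t * (\<integral>\<^sup>+s. indicator J s * \<psi> (t, s) \<partial>lborel) \<partial>lborel)
      = (\<integral>\<^sup>+t. (\<integral>\<^sup>+s. indicator (I \<times> J) (t, s) * \<psi> (t, s) \<partial>lborel) \<partial>lborel)"
    by (rule nn_integral_cong, subst nn_integral_cmult[symmetric])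
       (auto simp: indicator_times mult_ac)
  also have "\<dots> = (\<integral>\<^sup>+z. indicator (I \<times> J) z * \<psi> z \<partial>(lborel \<Otimes>\<^sub>M lborel))"
    by (rule lborel.nn_integral_fst) (simp add: lborel_prod)
  finally show ?thesis by (simp add: lborel_prod)
qed

lemma measurable_sq_norm:
  fixes \<phi> :: "'b::topological_space \<Rightarrow> 'a::real_normed_vector"
  assumes "continuous_on UNIV \<phi>"
  shows "(\<lambda>z. ennreal ((norm (\<phi> z))\<^sup>2)) \<in> borel_measurable borel"
  using assms by (intro measurable_compose[OF _ measurable_ennreal] borel_measurable_continuous_onI
      continuous_intros)

lemma L2_sq_on_slice_le:
  fixes \<phi> \<psi> :: "real \<times> real \<Rightarrow> 'a::real_inner"
  assumes cont: "continuous_on UNIV \<phi>" "continuous_on UNIV \<psi>"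
    and deriv: "\<And>t s. ((\<lambda>s. \<phi> (t, s)) has_vector_derivative \<psi> (t, s)) (at s)"
    and [measurable]: "I \<in> sets borel" and "a < b" and "s \<in> {a..b}"
  shows "L2_sq_on I (\<lambda>t. \<phi> (t, s))
           \<le> ennreal (2 / (b - a)) * L2_sq_on (I \<times> {a..<b}) \<phi> + ennreal (b - a) * L2_sq_on (I \<times> {a..<b}) \<psi>"
proof -
  let ?P = "\<lambda>\<theta> t. L2_sq_on {a..<b} (\<lambda>s. \<theta> (t, s) :: 'a)"
  have [measurable]: "(\<lambda>z. ennreal ((norm (\<phi> z))\<^sup>2)) \<in> borel_measurable (borel \<Otimes>\<^sub>M borel)"
    "(\<lambda>z. ennreal ((norm (\<psi> z))\<^sup>2)) \<in> borel_measurable (borel \<Otimes>\<^sub>M borel)"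
    unfolding borel_prod using cont by (simp_all only: measurable_sq_norm)
  have [measurable]: "?P \<phi> \<in> borel_measurable lborel" "?P \<psi> \<in> borel_measurable lborel"
    unfolding L2_sq_on_def by measurable
  have iterated: "(\<integral>\<^sup>+t. indicator I t * ?P \<theta> t \<partial>lborel) = L2_sq_on (I \<times> {a..<b}) \<theta>"
    if "continuous_on UNIV \<theta>" for \<theta> :: "real \<times> real \<Rightarrow> 'a"
    unfolding L2_sq_on_def using that by (intro nn_integral_rectangle_iterated measurable_sq_norm) auto
  have "L2_sq_on I (\<lambda>t. \<phi> (t, s))
      \<le> (\<integral>\<^sup>+t. indicator I t * (ennreal (2 / (b - a)) * ?P \<phi> t + ennreal (b - a) * ?P \<psi> t) \<partial>lborel)"
    unfolding L2_sq_on_def[of I]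
  proof (intro nn_integral_mono mult_left_mono)
    fix t
    show "ennreal ((norm (\<phi> (t, s)))\<^sup>2) \<le> ennreal (2 / (b - a)) * ?P \<phi> t + ennreal (b - a) * ?P \<psi> t"
      using deriv \<open>a < b\<close> \<open>s \<in> {a..b}\<close>
      by (intro sq_norm_le_L2_sq_on_1d continuous_on_compose2[OF cont(2)] continuous_intros) auto
  qed simp
  also have "\<dots> = ennreal (2 / (b - a)) * (\<integral>\<^sup>+t. indicator I t * ?P \<phi> t \<partial>lborel)
                 + ennreal (b - a) * (\<integral>\<^sup>+t. indicator I t * ?P \<psi> t \<partial>lborel)"
    by (simp add: distrib_left mult.left_commute[of "indicator I _"] nn_integral_add nn_integral_cmult)
  finally show ?thesis using cont by (simp add: iterated)
qed

lemma sq_norm_le_L2_sq_on_rectangle: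
  fixes f F1 F2 F12 :: "real \<times> real \<Rightarrow> 'a::real_inner"
  assumes cont: "continuous_on UNIV f" "continuous_on UNIV F1" "continuous_on UNIV F2"
      "continuous_on UNIV F12"
    and D1: "\<And>t s. ((\<lambda>t. f (t, s)) has_vector_derivative F1 (t, s)) (at t)"
    and D2: "\<And>t s. ((\<lambda>s. f (t, s)) has_vector_derivative F2 (t, s)) (at s)"
    and D12: "\<And>t s. ((\<lambda>s. F1 (t, s)) has_vector_derivative F12 (t, s)) (at s)"
    and "a1 < b1" "a2 < b2" "x1 \<in> {a1..b1}" "x2 \<in> {a2..b2}"
  shows "ennreal ((norm (f (x1, x2)))\<^sup>2) \<le> 4 *
      (  ennreal ((b1 - a1) / (b2 - a2)) * L2_sq_on ({a1..<b1} \<times> {a2..<b2}) F1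
       + ennreal ((b1 - a1) * (b2 - a2)) * L2_sq_on ({a1..<b1} \<times> {a2..<b2}) F12
       + ennreal ((b2 - a2) / (b1 - a1)) * L2_sq_on ({a1..<b1} \<times> {a2..<b2}) F2
       + ennreal (1 / ((b1 - a1) * (b2 - a2))) * L2_sq_on ({a1..<b1} \<times> {a2..<b2}) f)"
proof -
  define l1 l2 where "l1 = b1 - a1" and "l2 = b2 - a2"
  have "l1 > 0" "l2 > 0" using \<open>a1 < b1\<close> \<open>a2 < b2\<close> by (simp_all add: l1_def l2_def)
  let ?R = "{a1..<b1} \<times> {a2..<b2}"
  let ?A = "L2_sq_on ?R f" and ?B = "L2_sq_on ?R F2" and ?C = "L2_sq_on ?R F1" and ?D = "L2_sq_on ?R F12"
  have "ennreal ((norm (f (x1, x2)))\<^sup>2)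
      \<le> ennreal (2 / l1) * L2_sq_on {a1..<b1} (\<lambda>t. f (t, x2)) + ennreal l1 * L2_sq_on {a1..<b1} (\<lambda>t. F1 (t, x2))"
    unfolding l1_def using D1 \<open>a1 < b1\<close> \<open>x1 \<in> {a1..b1}\<close>
    by (intro sq_norm_le_L2_sq_on_1d continuous_on_compose2[OF cont(2)] continuous_intros) auto
  also have "\<dots> \<le> ennreal (2 / l1) * (ennreal (2 / l2) * ?A + ennreal l2 * ?B)
                 + ennreal l1 * (ennreal (2 / l2) * ?C + ennreal l2 * ?D)"
    unfolding l2_def using cont D2 D12 \<open>a2 < b2\<close> \<open>x2 \<in> {a2..b2}\<close>
    by (intro add_mono mult_left_mono L2_sq_on_slice_le) auto
  also have "\<dots> = ennreal (4 / (l1 * l2)) * ?A + ennreal (2 * (l2 / l1)) * ?B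
                 + ennreal (l1 * (2 / l2)) * ?C + ennreal (l1 * l2) * ?D"
    using \<open>l1 > 0\<close> \<open>l2 > 0\<close>
    by (simp add: distrib_left mult.assoc[symmetric] ennreal_mult[symmetric] add_ac)
  also have "\<dots> \<le> ennreal (4 / (l1 * l2)) * ?A + ennreal (4 * (l2 / l1)) * ?B
                 + ennreal (4 * (l1 / l2)) * ?C + ennreal (4 * (l1 * l2)) * ?D"
    using \<open>l1 > 0\<close> \<open>l2 > 0\<close> by (intro add_mono mult_right_mono ennreal_leI) (auto simp: divide_right_mono)
  also have "\<dots> = 4 * (ennreal (l1 / l2) * ?C + ennreal (l1 * l2) * ?D
                      + ennreal (l2 / l1) * ?B + ennreal (1 / (l1 * l2)) * ?A)"
    using \<open>l1 > 0\<close> \<open>l2 > 0\<close>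
    by (simp add: distrib_left mult.assoc[symmetric] ennreal_mult[symmetric] add_ac flip: ennreal_numeral)
  finally show ?thesis by (simp add: l1_def l2_def)
qed

lemma centered_interval_iff_floor:
  fixes l x :: real
  assumes "l > 0"
  shows "l * of_int k - l / 2 \<le> x \<and> x < l * of_int k + l / 2 \<longleftrightarrow> k = \<lfloor>x / l + 1 / 2\<rfloor>"
proof -
  have "l * of_int k - l / 2 \<le> x \<longleftrightarrow> of_int k \<le> x / l + 1 / 2"
    and "x < l * of_int k + l / 2 \<longleftrightarrow> x / l + 1 / 2 < of_int k + 1"
    using assms by (simp_all add: field_simps)
  then show ?thesis by (metis floor_eq_iff)
qed

lemma mem_Qa_iff:
  assumes "l1 > 0" "l2 > 0"
  shows "z \<in> Qa l1 l2 \<alpha> \<longleftrightarrow> \<alpha> = (\<lfloor>fst z / l1 + 1 / 2\<rfloor>, \<lfloor>snd z / l2 + 1 / 2\<rfloor>)"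
  using centered_interval_iff_floor[OF assms(1), of "fst \<alpha>" "fst z"]
    centered_interval_iff_floor[OF assms(2), of "snd \<alpha>" "snd z"]
  by (cases z; cases \<alpha>) (auto simp: Qa_def)

lemma Qa_eq_Ico_times_Ico:
  "Qa l1 l2 \<alpha> = {l1 * of_int (fst \<alpha>) - l1 / 2..<l1 * of_int (fst \<alpha>) + l1 / 2}
                \<times> {l2 * of_int (snd \<alpha>) - l2 / 2..<l2 * of_int (snd \<alpha>) + l2 / 2}"
  by (auto simp: Qa_def)

lemma nn_integral_sum_Qa:
  fixes g :: "real \<times> real \<Rightarrow> ennreal"
  assumes "l1 > 0" "l2 > 0" and [measurable]: "g \<in> borel_measurable borel"
  shows "(\<integral>\<^sup>+\<alpha>. (\<integral>\<^sup>+z. indicator (Qa l1 l2 \<alpha>) z * g z \<partial>lborel) \<partial>count_space UNIV) = (\<integral>\<^sup>+z. g z \<partial>lborel)"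
proof -
  interpret pair_sigma_finite "count_space (UNIV :: (int \<times> int) set)" lborel
    by (intro pair_sigma_finite.intro sigma_finite_measure_count_space sigma_finite_lborel)
  have "(\<lambda>(\<alpha>, z). indicator (Qa l1 l2 \<alpha>) z * g z) \<in> borel_measurable (count_space UNIV \<Otimes>\<^sub>M lborel)"
  proof (rule measurable_pair_measure_countable1)
    fix \<alpha> :: "int \<times> int"
    have [measurable]: "Qa l1 l2 \<alpha> \<in> sets borel"
      unfolding Qa_eq_Ico_times_Ico borel_prod[symmetric] by measurable
    show "(\<lambda>z. case (\<alpha>, z) of (\<alpha>, z) \<Rightarrow> indicator (Qa l1 l2 \<alpha>) z * g z) \<in> borel_measurable lborel"
      by simp
  qed simp
  then have "(\<integral>\<^sup>+\<alpha>. (\<integral>\<^sup>+z. indicator (Qa l1 l2 \<alpha>) z * g z \<partial>lborel) \<partial>count_space UNIV)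
      = (\<integral>\<^sup>+z. (\<integral>\<^sup>+\<alpha>. indicator (Qa l1 l2 \<alpha>) z * g z \<partial>count_space UNIV) \<partial>lborel)"
    by (simp add: Fubini')
  also have "\<dots> = (\<integral>\<^sup>+z. g z \<partial>lborel)"
  proof (rule nn_integral_cong)
    fix z :: "real \<times> real"
    have "(\<lambda>\<alpha>. indicator (Qa l1 l2 \<alpha>) z * g z)
        = (\<lambda>\<alpha>. g z * indicator {(\<lfloor>fst z / l1 + 1 / 2\<rfloor>, \<lfloor>snd z / l2 + 1 / 2\<rfloor>)} \<alpha>)"
      using mem_Qa_iff[OF assms(1,2)] by (auto simp: indicator_def)
    then show "(\<integral>\<^sup>+\<alpha>. indicator (Qa l1 l2 \<alpha>) z * g z \<partial>count_space UNIV) = g z"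
      by (simp add: nn_integral_cmult_indicator)
  qed
  finally show ?thesis .
qed

lemma has_vector_derivative_slice1:
  fixes F :: "real \<times> real \<Rightarrow> 'a::real_normed_vector"
  assumes "(F has_derivative F') (at (t, s))"
  shows "((\<lambda>t. F (t, s)) has_vector_derivative F' (1, 0)) (at t)"
proof -
  have "((\<lambda>t. (t, s)) has_derivative (\<lambda>h. (h, 0))) (at t)"
    by (auto intro!: derivative_eq_intros)
  then have "(F \<circ> (\<lambda>t. (t, s)) has_derivative F' \<circ> (\<lambda>h. (h, 0))) (at t)"
    by (rule diff_chain_at) (simp add: assms)
  moreover have "F' \<circ> (\<lambda>h. (h, 0)) = (\<lambda>h. h *\<^sub>R F' (1, 0))"
  proof
    fix h
    have "F' (h *\<^sub>R (1, 0)) = h *\<^sub>R F' (1, 0)"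
      using has_derivative_linear[OF assms] by (rule linear_cmul)
    then show "(F' \<circ> (\<lambda>h. (h, 0))) h = h *\<^sub>R F' (1, 0)" by simp
  qed
  ultimately show ?thesis by (simp add: has_vector_derivative_def o_def)
qed

lemma has_vector_derivative_slice2:
  fixes F :: "real \<times> real \<Rightarrow> 'a::real_normed_vector"
  assumes "(F has_derivative F') (at (t, s))"
  shows "((\<lambda>s. F (t, s)) has_vector_derivative F' (0, 1)) (at s)"
proof -
  have "((\<lambda>s. (t, s)) has_derivative (\<lambda>h. (0, h))) (at s)"
    by (auto intro!: derivative_eq_intros)
  then have "(F \<circ> (\<lambda>s. (t, s)) has_derivative F' \<circ> (\<lambda>h. (0, h))) (at s)"
    by (rule diff_chain_at) (simp add: assms)
  moreover have "F' \<circ> (\<lambda>h. (0, h)) = (\<lambda>h. h *\<^sub>R F' (0, 1))"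
  proof
    fix h
    have "F' (h *\<^sub>R (0, 1)) = h *\<^sub>R F' (0, 1)"
      using has_derivative_linear[OF assms] by (rule linear_cmul)
    then show "(F' \<circ> (\<lambda>h. (0, h))) h = h *\<^sub>R F' (0, 1)" by simp
  qed
  ultimately show ?thesis by (simp add: has_vector_derivative_def o_def)
qed

lemma d1_eq:
  assumes "\<And>x. (F has_derivative F' x) (at x)"
  shows "d1 F = (\<lambda>x. F' x (1, 0))"
  by (auto simp: d1_def intro!: vector_derivative_at has_vector_derivative_slice1 assms)

lemma d2_eq:
  assumes "\<And>x. (F has_derivative F' x) (at x)"
  shows "d2 F = (\<lambda>x. F' x (0, 1))"
  by (auto simp: d2_def intro!: vector_derivative_at has_vector_derivative_slice2 assms)

lemma Ck2_partial_derivatives: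
  assumes "Ck 2 f"
  shows "continuous_on UNIV f" "continuous_on UNIV (d1 f)" "continuous_on UNIV (d2 f)"
    and "continuous_on UNIV (d2 (d1 f))"
    and "\<And>t s. ((\<lambda>t. f (t, s)) has_vector_derivative d1 f (t, s)) (at t)"
    and "\<And>t s. ((\<lambda>s. f (t, s)) has_vector_derivative d2 f (t, s)) (at s)"
    and "\<And>t s. ((\<lambda>s. d1 f (t, s)) has_vector_derivative d2 (d1 f) (t, s)) (at s)"
proof -
  have everywhere_continuous: "continuous_on UNIV F" if "\<And>x. (F has_derivative F' x) (at x)"
    for F :: "real \<times> real \<Rightarrow> complex" and F'
    using that by (intro continuous_at_imp_continuous_on ballI has_derivative_continuous)
  obtain f' where f': "\<And>x. (f has_derivative f' x) (at x)" and C1: "\<And>v. Ck 1 (\<lambda>x. f' x v)"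
    using assms unfolding numeral_2_eq_2 Ck.simps(2) One_nat_def by blast
  obtain g where g: "\<And>x. ((\<lambda>x. f' x (1, 0)) has_derivative g x) (at x)"
    and g_cont: "continuous_on UNIV (\<lambda>x. g x (0, 1))"
    using C1[of "(1, 0)"] unfolding One_nat_def Ck.simps by blast
  obtain k where k: "\<And>x. ((\<lambda>x. f' x (0, 1)) has_derivative k x) (at x)"
    using C1[of "(0, 1)"] unfolding One_nat_def Ck.simps by blast
  show "continuous_on UNIV f"
    using f' by (rule everywhere_continuous)
  show "continuous_on UNIV (d1 f)"
    unfolding d1_eq[OF f'] using g by (rule everywhere_continuous)
  show "continuous_on UNIV (d2 f)"
    unfolding d2_eq[OF f'] using k by (rule everywhere_continuous)
  show "continuous_on UNIV (d2 (d1 f))"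
    unfolding d1_eq[OF f'] d2_eq[OF g] by (rule g_cont)
  show "\<And>t s. ((\<lambda>t. f (t, s)) has_vector_derivative d1 f (t, s)) (at t)"
    unfolding d1_eq[OF f'] by (rule has_vector_derivative_slice1[OF f'])
  show "\<And>t s. ((\<lambda>s. f (t, s)) has_vector_derivative d2 f (t, s)) (at s)"
    unfolding d2_eq[OF f'] by (rule has_vector_derivative_slice2[OF f'])
  show "\<And>t s. ((\<lambda>s. d1 f (t, s)) has_vector_derivative d2 (d1 f) (t, s)) (at s)"
    unfolding d1_eq[OF f'] d2_eq[OF g] by (rule has_vector_derivative_slice2[OF g])
qed

lemma nn_integral_Sup_sq_norm_Qa_le:
  fixes f :: "real \<times> real \<Rightarrow> complex"
  assumes "Ck 2 f" and "l1 > 0" "l2 > 0"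
  shows "(\<integral>\<^sup>+\<alpha>. (SUP x\<in>Qa l1 l2 \<alpha>. ennreal ((norm (f x))\<^sup>2)) \<partial>count_space UNIV) \<le> 4 *
      (  ennreal (l1 / l2) * L2_sq_on UNIV (d1 f) + ennreal (l1 * l2) * L2_sq_on UNIV (d2 (d1 f))
       + ennreal (l2 / l1) * L2_sq_on UNIV (d2 f) + ennreal (1 / (l1 * l2)) * L2_sq_on UNIV f)"
proof -
  note partials = Ck2_partial_derivatives[OF assms(1)]
  define B where "B S = 4 *
      (  ennreal (l1 / l2) * L2_sq_on S (d1 f) + ennreal (l1 * l2) * L2_sq_on S (d2 (d1 f))
       + ennreal (l2 / l1) * L2_sq_on S (d2 f) + ennreal (1 / (l1 * l2)) * L2_sq_on S f)" for S
  have L2_sum: "(\<integral>\<^sup>+\<alpha>. L2_sq_on (Qa l1 l2 \<alpha>) \<phi> \<partial>count_space UNIV) = L2_sq_on UNIV \<phi>"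
    if "continuous_on UNIV \<phi>" for \<phi> :: "real \<times> real \<Rightarrow> complex"
    unfolding L2_sq_on_def using nn_integral_sum_Qa[OF assms(2,3) measurable_sq_norm[OF that]] by simp
  have "(SUP x\<in>Qa l1 l2 \<alpha>. ennreal ((norm (f x))\<^sup>2)) \<le> B (Qa l1 l2 \<alpha>)" for \<alpha>
  proof (rule SUP_least)
    fix x assume "x \<in> Qa l1 l2 \<alpha>"
    moreover obtain x1 x2 where "x = (x1, x2)" by fastforce
    ultimately show "ennreal ((norm (f x))\<^sup>2) \<le> B (Qa l1 l2 \<alpha>)"
      using sq_norm_le_L2_sq_on_rectangle[OF partials, of "l1 * of_int (fst \<alpha>) - l1 / 2"
          "l1 * of_int (fst \<alpha>) + l1 / 2" "l2 * of_int (snd \<alpha>) - l2 / 2" "l2 * of_int (snd \<alpha>) + l2 / 2"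
          x1 x2] assms(2,3)
      by (simp add: B_def Qa_eq_Ico_times_Ico)
  qed
  then have "(\<integral>\<^sup>+\<alpha>. (SUP x\<in>Qa l1 l2 \<alpha>. ennreal ((norm (f x))\<^sup>2)) \<partial>count_space UNIV)
      \<le> (\<integral>\<^sup>+\<alpha>. B (Qa l1 l2 \<alpha>) \<partial>count_space UNIV)"
    by (intro nn_integral_mono)
  also have "\<dots> = B UNIV"
    using partials by (simp add: B_def nn_integral_add nn_integral_cmult L2_sum)
  finally show ?thesis by (simp add: B_def)
qed

theorem mainTheorem3:
  "\<exists>C::real. C > 0 \<and>
    (\<forall>(a1::real) b1 a2 b2 (f :: real \<times> real \<Rightarrow> complex) (I1::real set) (I2::real set).
      a1 < b1 \<longrightarrow> a2 < b2 \<longrightarrow>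
      {a1<..<b1} \<subseteq> I1 \<longrightarrow> I1 \<subseteq> {a1..b1} \<longrightarrow>
      {a2<..<b2} \<subseteq> I2 \<longrightarrow> I2 \<subseteq> {a2..b2} \<longrightarrow>
      smooth f \<longrightarrow>
      (let l1 = b1 - a1; l2 = b2 - a2 in
        (\<integral>\<^sup>+ \<alpha>. (SUP x\<in>Qa l1 l2 \<alpha>. ennreal ((cmod (f x))\<^sup>2)) \<partial>count_space (UNIV :: (int \<times> int) set))
        \<le> ennreal C *
          ( ennreal (l1 / l2) * (\<integral>\<^sup>+ x. ennreal ((cmod (d1 f x))\<^sup>2) \<partial>lborel)
          + ennreal (l1 * l2) * (\<integral>\<^sup>+ x. ennreal ((cmod (d2 (d1 f) x))\<^sup>2) \<partial>lborel)
          + ennreal (l2 / l1) * (\<integral>\<^sup>+ x. ennreal ((cmod (d2 f x))\<^sup>2) \<partial>lborel)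
          + ennreal (1 / (l1 * l2)) * (\<integral>\<^sup>+ x. ennreal ((cmod (f x))\<^sup>2) \<partial>lborel))))"
  using nn_integral_Sup_sq_norm_Qa_le
  by (intro exI[of _ 4]) (simp add: Let_def L2_sq_on_def smooth_def)

end
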